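(* Let $X$ be a complex Banach space of dimension at least $2$, and let $\mathcal S\subseteq\mathcal B(X)$ be a multiplicative semigroup such that $\operatorname{rank}[S,T]\le 1$ for all $S,T\in\mathcal S$. Suppose that $A,B\in\mathcal S$ satisfy $[A,B]=y\otimes\phi$ for some non-zero vector $y\in X$ and some non-zero functional $\phi\in X^*$. Then $\phi(Cy)=0$ for every $C\in\mathcal S\cup\{I\}$.
   Context: $\mathcal B(X)$ is the algebra of bounded linear operators on $X$ and $I$ is the identity operator. A semigroup is a subset of $\mathcal B(X)$ closed under multiplication. $[S,T]=ST-TS$. For $y\in X$ and $\phi\in X^*$, $y\otimes\phi$ denotes the operator $x\mapsto\phi(x)y$. *)

theory Defs
  imports "HOL-Analysis.Analysis"
begin

class complex_banach = banach +
  fixes cscale :: "complex \<Rightarrow> 'a \<Rightarrow> 'a"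
  assumes cscale_add_right: "cscale a (x + y) = cscale a x + cscale a y"
    and cscale_add_left: "cscale (a + b) x = cscale a x + cscale b x"
    and cscale_cscale: "cscale a (cscale b x) = cscale (a * b) x"
    and cscale_one: "cscale 1 x = x"
    and scaleR_cscale: "scaleR r x = cscale (complex_of_real r) x"
    and norm_cscale: "norm (cscale a x) = cmod a * norm x"

definition bop :: "('a::complex_banach \<Rightarrow> 'a) \<Rightarrow> bool" where
  "bop T \<longleftrightarrow> bounded_linear T \<and> (\<forall>c x. T (cscale c x) = cscale c (T x))"

definition cfunctional :: "('a::complex_banach \<Rightarrow> complex) \<Rightarrow> bool" where
  "cfunctional \<phi> \<longleftrightarrow> bounded_linear \<phi> \<and> (\<forall>c x. \<phi> (cscale c x) = c * \<phi> x)"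

definition commutator :: "('a::complex_banach \<Rightarrow> 'a) \<Rightarrow> ('a \<Rightarrow> 'a) \<Rightarrow> ('a \<Rightarrow> 'a)" where
  "commutator S T = (\<lambda>x. S (T x) - T (S x))"

definition rank_le_one :: "('a::complex_banach \<Rightarrow> 'a) \<Rightarrow> bool" where
  "rank_le_one T \<longleftrightarrow> (\<exists>v. \<forall>x. \<exists>c. T x = cscale c v)"

definition tensor_op :: "'a::complex_banach \<Rightarrow> ('a \<Rightarrow> complex) \<Rightarrow> ('a \<Rightarrow> 'a)" where
  "tensor_op y \<phi> = (\<lambda>x. cscale (\<phi> x) y)"

definition cdim_ge_two :: "'a::complex_banach itself \<Rightarrow> bool" where
  "cdim_ge_two _ \<longleftrightarrow> (\<exists>u v::'a. \<forall>a b. cscale a u + cscale b v = 0 \<longrightarrow> a = 0 \<and> b = 0)"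

end

theory Submission
  imports Defs
begin

text \<open>
  We show \<open>\<phi>(C y) = 0\<close> for every \<open>C \<in> \<S> \<union> {I}\<close>. If this value were non-zero, the rank dichotomy
    for \<open>[CA,B]\<close>, \<open>[AC,B]\<close> and their rotations together with the Jacobi identity lead to a
    contradiction by a finite case analysis on zero patterns.
  The theorem follows by adjoining the identity to \<open>\<S>\<close>.
\<close>

interpretation cvs: vector_space "cscale :: complex \<Rightarrow> 'a::complex_banach \<Rightarrow> 'a"
  by unfold_locales (auto simp: cscale_add_right cscale_add_left cscale_cscale cscale_one)

lemma module_complex_mult: "module ((*) :: complex \<Rightarrow> complex \<Rightarrow> complex)"
  by unfold_locales (auto simp: algebra_simps)

text \<open>Complex-linear operators and functionals, expressed through the library notion of module
  homomorphism (whose additivity and homogeneity rules are collected in \<open>hom_simps\<close>).\<close>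
abbreviation clinear_op :: "('a::complex_banach \<Rightarrow> 'a) \<Rightarrow> bool" where
  "clinear_op T \<equiv> module_hom cscale cscale T"

abbreviation clinear_fn :: "('a::complex_banach \<Rightarrow> complex) \<Rightarrow> bool" where
  "clinear_fn f \<equiv> module_hom cscale (*) f"

lemmas hom_simps = module_hom.add module_hom.scale module_hom.zero module_hom.neg module_hom.diff

lemma clinear_opI:
  assumes "\<And>x y. T (x + y) = T x + T y" and "\<And>c x. T (cscale c x) = cscale c (T x)"
  shows "clinear_op T"
  using assms by (simp add: module_hom_iff cvs.module_axioms)

lemma clinear_fnI:
  assumes "\<And>x y. f (x + y) = f x + f y" and "\<And>c x. f (cscale c x) = c * f x"
  shows "clinear_fn f"
  using assms by (simp add: module_hom_iff cvs.module_axioms module_complex_mult)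

lemma clinear_fn_scale: "clinear_fn f \<Longrightarrow> clinear_fn (\<lambda>x. c * f x)"
  by (rule clinear_fnI) (simp_all add: hom_simps algebra_simps)

lemma clinear_fn_diff: "clinear_fn f \<Longrightarrow> clinear_fn g \<Longrightarrow> clinear_fn (\<lambda>x. f x - g x)"
  by (rule clinear_fnI) (simp_all add: hom_simps algebra_simps)

lemma clinear_fn_uminus: "clinear_fn f \<Longrightarrow> clinear_fn (\<lambda>x. - f x)"
  by (rule clinear_fnI) (simp_all add: hom_simps)

lemma tensor_op_apply [simp]: "tensor_op u f x = cscale (f x) u"
  by (simp add: tensor_op_def)

lemma rank_le_one_multiple:
  assumes "rank_le_one T" and "T x \<noteq> 0"
  shows "\<exists>c. T z = cscale c (T x)"
proof -
  obtain v where v: "\<And>z. \<exists>c. T z = cscale c v"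
    using assms(1) unfolding rank_le_one_def by blast
  obtain a where a: "T x = cscale a v" using v by blast
  obtain b where b: "T z = cscale b v" using v by blast
  have "a \<noteq> 0" using a assms(2) by auto
  then have "T z = cscale (b / a) (T x)" using a b by simp
  then show ?thesis ..
qed

lemma rank_one_representation:
  assumes T: "clinear_op T" and "rank_le_one T"
  shows "\<exists>u f. clinear_fn f \<and> T = tensor_op u f"
proof (cases "\<forall>x. T x = 0")
  case True
  have "clinear_fn (\<lambda>_. 0)" by (rule clinear_fnI) simp_all
  with True show ?thesis by (intro exI[of _ 0] exI[of _ "\<lambda>_. 0"]) auto
next
  case False
  then obtain x0 where u: "T x0 \<noteq> 0" by blast
  define f where "f z = (SOME c. T z = cscale c (T x0))" for z
  have f: "T z = cscale (f z) (T x0)" for z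
    unfolding f_def by (rule someI_ex) (rule rank_le_one_multiple[OF assms(2) u])
  have "clinear_fn f"
  proof (rule clinear_fnI)
    fix x y
    have "cscale (f (x + y)) (T x0) = T (x + y)" by (rule f[symmetric])
    also have "\<dots> = cscale (f x) (T x0) + cscale (f y) (T x0)"
      by (simp only: module_hom.add[OF T] f[of x, symmetric] f[of y, symmetric])
    also have "\<dots> = cscale (f x + f y) (T x0)" by (simp add: cscale_add_left)
    finally have "cscale (f (x + y)) (T x0) = cscale (f x + f y) (T x0)" .
    then show "f (x + y) = f x + f y" using u by simp
  next
    fix c x
    have "cscale (f (cscale c x)) (T x0) = T (cscale c x)" by (rule f[symmetric])
    also have "\<dots> = cscale c (cscale (f x) (T x0))" by (simp only: module_hom.scale[OF T] f[of x, symmetric])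
    also have "\<dots> = cscale (c * f x) (T x0)" by simp
    finally have "cscale (f (cscale c x)) (T x0) = cscale (c * f x) (T x0)" .
    then show "f (cscale c x) = c * f x" using u by simp
  qed
  moreover have "T = tensor_op (T x0) f"
    unfolding tensor_op_def by (rule ext) (rule f)
  ultimately show ?thesis by blast
qed

definition cparallel :: "'a::complex_banach \<Rightarrow> 'a \<Rightarrow> bool" where
  "cparallel u v \<longleftrightarrow> (\<exists>c. u = cscale c v) \<or> (\<exists>c. v = cscale c u)"

definition proportional :: "('a::complex_banach \<Rightarrow> complex) \<Rightarrow> ('a \<Rightarrow> complex) \<Rightarrow> bool" where
  "proportional f g \<longleftrightarrow> (\<exists>c. \<forall>x. f x = c * g x) \<or> (\<exists>c. \<forall>x. g x = c * f x)"

lemma proportional_sym: "proportional f g \<Longrightarrow> proportional g f"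
  unfolding proportional_def by blast

lemma cparallel_multiple:
  assumes "cparallel v u" and "u \<noteq> 0"
  shows "\<exists>c. v = cscale c u"
  using assms(1) unfolding cparallel_def
proof (elim disjE exE)
  fix c assume c: "u = cscale c v"
  then have "c \<noteq> 0" using assms(2) by auto
  then have "v = cscale (inverse c) u" using c by simp
  then show ?thesis ..
qed blast

lemma proportional_multiple:
  assumes "proportional g f" and "f u \<noteq> 0"
  shows "\<exists>c. \<forall>z. g z = c * f z"
  using assms(1) unfolding proportional_def
proof (elim disjE exE)
  fix c assume c: "\<forall>z. f z = c * g z"
  then have "c \<noteq> 0" using assms(2) by auto
  then have "\<forall>z. g z = inverse c * f z" using c by (simp add: field_simps)
  then show ?thesis ..
qed blast

lemma multiple_alternative:
  assumes "cparallel v u \<or> proportional g f" and f: "clinear_fn f" and fu: "f u \<noteq> 0"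
  shows "(\<exists>a. v = cscale a u) \<or> (\<exists>a. \<forall>z. g z = a * f z)"
proof -
  have "u \<noteq> 0" using fu module_hom.zero[OF f] by auto
  then show ?thesis using assms(1) cparallel_multiple[of v u] proportional_multiple[of g f u] fu
    by blast
qed

text \<open>Otherwise a vector \<open>x'\<close> in the kernel
  of \<open>f\<^sub>1\<close> but not of \<open>f\<^sub>2\<close> produces the value \<open>d u\<^sub>2\<close>, \<open>d \<noteq> 0\<close>, and every other value, in particular
  \<open>f\<^sub>1(x\<^sub>0) u\<^sub>1 + f\<^sub>2(x\<^sub>0) u\<^sub>2\<close> with \<open>f\<^sub>1(x\<^sub>0) \<noteq> 0\<close>, must be a multiple of \<open>u\<^sub>2\<close>.\<close>
lemma two_term_rank_dichotomy:
  assumes f1: "clinear_fn f1" and f2: "clinear_fn f2"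
    and rank: "rank_le_one (\<lambda>x. cscale (f1 x) u1 + cscale (f2 x) u2)" (is "rank_le_one ?T")
  shows "cparallel u1 u2 \<or> proportional f1 f2"
proof (rule disjCI)
  assume "\<not> proportional f1 f2"
  then obtain x0 where x0: "f1 x0 \<noteq> 0"
    unfolding proportional_def by (metis mult_zero_left)
  have "\<not> (\<forall>x. f2 x = (f2 x0 / f1 x0) * f1 x)"
    using \<open>\<not> proportional f1 f2\<close> unfolding proportional_def by blast
  then obtain x1 where "f2 x1 \<noteq> (f2 x0 / f1 x0) * f1 x1" by blast
  then have d: "f1 x0 * f2 x1 - f2 x0 * f1 x1 \<noteq> 0" (is "?d \<noteq> 0")
    using x0 by (simp add: field_simps)
  show "cparallel u1 u2"
  proof (cases "u2 = 0")
    case True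
    then show ?thesis unfolding cparallel_def by (metis cvs.scale_zero_left)
  next
    case False
    define x' where "x' = cscale (f1 x0) x1 - cscale (f1 x1) x0"
    have Tx': "?T x' = cscale ?d u2"
      unfolding x'_def by (simp add: hom_simps[OF f1] hom_simps[OF f2] algebra_simps
          cvs.scale_left_diff_distrib)
    then have "?T x' \<noteq> 0" using d False by simp
    then obtain c where "?T x0 = cscale c (?T x')"
      using rank_le_one_multiple[OF rank] by blast
    then have "cscale (f1 x0) u1 + cscale (f2 x0) u2 = cscale (c * ?d) u2"
      by (simp only: Tx' cvs.scale_scale)
    then have "cscale (f1 x0) u1 = cscale (c * ?d - f2 x0) u2"
      by (simp add: cvs.scale_left_diff_distrib eq_diff_eq)
    then have "u1 = cscale ((c * ?d - f2 x0) / f1 x0) u2"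
      using x0 by (metis cvs.scale_scale cscale_one divide_inverse_commute
          left_inverse mult.commute)
    then show ?thesis unfolding cparallel_def by blast
  qed
qed

text \<open>For the final case analysis only the zero patterns matter: two vectors are annihilated by
  the same functionals, two functionals have the same kernel.\<close>
definition same_annihilators :: "'a::complex_banach \<Rightarrow> 'a \<Rightarrow> bool" where
  "same_annihilators u v \<longleftrightarrow> (\<forall>g. clinear_fn g \<longrightarrow> (g u = 0 \<longleftrightarrow> g v = 0))"

definition same_kernel :: "('a::complex_banach \<Rightarrow> complex) \<Rightarrow> ('a \<Rightarrow> complex) \<Rightarrow> bool" where
  "same_kernel f g \<longleftrightarrow> (\<forall>x. f x = 0 \<longleftrightarrow> g x = 0)"

lemma same_annihilatorsD: "same_annihilators u v \<Longrightarrow> clinear_fn g \<Longrightarrow> g u = 0 \<longleftrightarrow> g v = 0"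
  unfolding same_annihilators_def by blast

lemma same_kernelD: "same_kernel f g \<Longrightarrow> f x = 0 \<longleftrightarrow> g x = 0"
  unfolding same_kernel_def by blast

lemma two_term_rank_dichotomy_diff:
  assumes f1: "clinear_fn f1" and f2: "clinear_fn f2"
    and rank: "rank_le_one (\<lambda>x. cscale (f1 x) u1 - cscale (f2 x) u2)"
  shows "cparallel u1 u2 \<or> proportional f1 f2"
proof -
  have "rank_le_one (\<lambda>x. cscale (f1 x) u1 + cscale (- f2 x) u2)"
    using rank by simp
  then have "cparallel u1 u2 \<or> proportional f1 (\<lambda>x. - f2 x)"
    by (rule two_term_rank_dichotomy[OF f1 clinear_fn_uminus[OF f2]])
  moreover have "proportional f1 (\<lambda>x. - f2 x) \<Longrightarrow> proportional f1 f2"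
    unfolding proportional_def by (metis minus_equation_iff mult_minus_left mult_minus_right)
  ultimately show ?thesis by blast
qed

text \<open>When \<open>f\<^sub>1(u\<^sub>1)\<close> and \<open>f\<^sub>2(u\<^sub>2)\<close> do not vanish, the multiples in the dichotomy are non-zero, so it
  becomes a statement about zero patterns.\<close>
lemma difference_rank_dichotomy:
  assumes f1: "clinear_fn f1" and f2: "clinear_fn f2"
    and rank: "rank_le_one (\<lambda>x. cscale (f1 x) u1 - cscale (f2 x) u2)"
    and n1: "f1 u1 \<noteq> 0" and n2: "f2 u2 \<noteq> 0"
  shows "same_annihilators u1 u2 \<or> same_kernel f1 f2"
proof -
  consider c where "u1 = cscale c u2" | c where "u2 = cscale c u1"
    | c where "\<And>x. f1 x = c * f2 x" | c where "\<And>x. f2 x = c * f1 x"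
    using two_term_rank_dichotomy_diff[OF f1 f2 rank]
    unfolding cparallel_def proportional_def by blast
  then show ?thesis
  proof cases
    case (1 c)
    then have "c \<noteq> 0" using n1 module_hom.zero[OF f1] by auto
    then show ?thesis using 1 unfolding same_annihilators_def by (simp add: hom_simps)
  next
    case (2 c)
    then have "c \<noteq> 0" using n2 module_hom.zero[OF f2] by auto
    then show ?thesis using 2 unfolding same_annihilators_def by (simp add: hom_simps)
  next
    case (3 c)
    then have "c \<noteq> 0" using n1 by auto
    then show ?thesis using 3 unfolding same_kernel_def by simp
  next
    case (4 c)
    then have "c \<noteq> 0" using n2 by auto
    then show ?thesis using 4 unfolding same_kernel_def by simp
  qed
qed

lemma cross_values_nonzero:
  assumes "same_annihilators u1 u2 \<or> same_kernel f1 f2" and "clinear_fn f1" "clinear_fn f2"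
    and "f1 u1 \<noteq> 0" and "f2 u2 \<noteq> 0"
  shows "f1 u2 \<noteq> 0" and "f2 u1 \<noteq> 0"
  using assms unfolding same_annihilators_def same_kernel_def by blast+

lemma cparallel_shift_span:
  assumes "cparallel (cscale a w + cscale l u) w" and "l \<noteq> 0" and "u \<noteq> 0"
  shows "\<exists>\<beta>. w = cscale \<beta> u"
  using assms(1) unfolding cparallel_def
proof (elim disjE exE)
  fix c assume "cscale a w + cscale l u = cscale c w"
  then have e: "cscale (c - a) w = cscale l u"
    by (simp add: cvs.scale_left_diff_distrib algebra_simps)
  then have "c - a \<noteq> 0" using assms(2,3) by auto
  then have "w = cscale (l / (c - a)) u"
    using e by (metis cvs.scale_scale cscale_one divide_inverse_commute left_inverse mult.commute)
  then show ?thesis ..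
next
  fix c assume "w = cscale c (cscale a w + cscale l u)"
  then have e: "cscale (1 - c * a) w = cscale (c * l) u"
    by (simp add: cvs.scale_left_diff_distrib cvs.scale_right_distrib algebra_simps)
  then have "1 - c * a \<noteq> 0" using assms(2,3) by auto
  then have "w = cscale (c * l / (1 - c * a)) u"
    using e by (metis cvs.scale_scale cscale_one divide_inverse_commute left_inverse mult.commute)
  then show ?thesis ..
qed

lemma commutator_linear:
  assumes "clinear_op X" and "clinear_op Y"
  shows "clinear_op (commutator X Y)"
  by (rule clinear_opI)
    (simp_all add: commutator_def hom_simps[OF assms(1)] hom_simps[OF assms(2)]
      cvs.scale_right_diff_distrib)

lemma commutator_swap: "commutator Y X x = - commutator X Y x"
  by (simp add: commutator_def)

lemma commutator_comp_left:
  assumes "clinear_op X"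
  shows "commutator (X \<circ> Z) Y x = X (commutator Z Y x) + commutator X Y (Z x)"
  by (simp add: commutator_def hom_simps[OF assms])

lemma commutator_comp_right:
  assumes "clinear_op Y"
  shows "commutator X (Y \<circ> Z) x = commutator X Y (Z x) + Y (commutator X Z x)"
  by (simp add: commutator_def hom_simps[OF assms])

lemma commutator_tensor_op:
  assumes "clinear_op X"
  shows "commutator X (tensor_op u f) x = cscale (f x) (X u) - cscale (f (X x)) u"
  by (simp add: commutator_def hom_simps[OF assms])

lemma jacobi_identity:
  assumes "clinear_op A" "clinear_op B" "clinear_op C"
  shows "commutator A (commutator B C) x + commutator B (commutator C A) x
    + commutator C (commutator A B) x = 0"
  by (simp add: commutator_def hom_simps[OF assms(1)] hom_simps[OF assms(2)] hom_simps[OF assms(3)])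

text \<open>Three special situations in which a rank-one commutator \<open>[X,Y] = u \<otimes> f\<close> has trace
  \<open>f(u) = 0\<close>. First, \<open>u\<close> is a common eigenvector: then \<open>[X,Y] u = 0\<close>.\<close>
lemma trace_zero_common_eigenvector:
  assumes X: "clinear_op X" and Y: "clinear_op Y" and f: "clinear_fn f"
    and XY: "commutator X Y = tensor_op u f"
    and "X u = cscale a u" and "Y u = cscale b u"
  shows "f u = 0"
proof -
  have "cscale (f u) u = commutator X Y u" by (simp add: XY)
  also have "\<dots> = 0"
    using assms(5,6) by (simp add: commutator_def hom_simps[OF X] hom_simps[OF Y] mult.commute)
  finally show ?thesis using module_hom.zero[OF f] by auto
qed

text \<open>Second, \<open>f\<close> is a common eigenfunctional: then \<open>f \<circ> [X,Y] = 0\<close>.\<close>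
lemma trace_zero_common_eigenfunctional:
  assumes f: "clinear_fn f"
    and XY: "commutator X Y = tensor_op u f"
    and "\<And>z. f (X z) = a * f z" and "\<And>z. f (Y z) = b * f z"
  shows "f u = 0"
proof -
  have "f u * f u = f (commutator X Y u)" by (simp add: XY module_hom.scale[OF f])
  also have "\<dots> = 0" using assms(3,4) by (simp add: commutator_def module_hom.diff[OF f])
  finally show ?thesis by simp
qed

text \<open>One computes \<open>[X\<^sup>2,Y\<^sup>2] = X w \<otimes> f + w \<otimes> (f \<circ> X)\<close> with \<open>w = Y u + b u\<close> and
  \<open>X w = a w + f(u) u\<close>; the rank dichotomy reduces to one of the first two situations.\<close>
lemma trace_zero_mixed:
  assumes X: "clinear_op X" and Y: "clinear_op Y" and f: "clinear_fn f"
    and XY: "commutator X Y = tensor_op u f"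
    and a: "X u = cscale a u" and b: "\<And>z. f (Y z) = b * f z"
    and rank: "rank_le_one (commutator (X \<circ> X) (Y \<circ> Y))"
  shows "f u = 0"
proof (rule ccontr)
  assume fu: "f u \<noteq> 0"
  then have u: "u \<noteq> 0" using module_hom.zero[OF f] by auto
  define w where "w = Y u + cscale b u"
  have XY2: "commutator X (Y \<circ> Y) z = cscale (f z) w" for z
    unfolding commutator_comp_right[OF Y]
    by (simp add: XY b w_def hom_simps[OF Y] cvs.scale_right_distrib)
  have "X (Y u) = Y (X u) + commutator X Y u" by (simp add: commutator_def)
  then have Xw: "X w = cscale a w + cscale (f u) u"
    by (simp add: w_def XY a hom_simps[OF X] hom_simps[OF Y] cvs.scale_right_distrib)
  have "commutator (X \<circ> X) (Y \<circ> Y) = (\<lambda>x. cscale (f x) (X w) + cscale ((f \<circ> X) x) w)"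
    by (rule ext) (simp only: commutator_comp_left[OF X] XY2 module_hom.scale[OF X] comp_apply)
  then have "rank_le_one (\<lambda>x. cscale (f x) (X w) + cscale ((f \<circ> X) x) w)"
    using rank by simp
  then have "cparallel (X w) w \<or> proportional f (f \<circ> X)"
    by (rule two_term_rank_dichotomy[OF f module_hom_compose[OF X f]])
  then show False
  proof
    assume "cparallel (X w) w"
    then have "cparallel (cscale a w + cscale (f u) u) w" by (simp only: Xw)
    then obtain \<beta> where "w = cscale \<beta> u"
      using cparallel_shift_span[OF _ fu u] by blast
    then have "Y u = cscale (\<beta> - b) u"
      by (simp add: w_def cvs.scale_left_diff_distrib eq_diff_eq)
    then show False using trace_zero_common_eigenvector[OF X Y f XY a] fu by blast
  next
    assume "proportional f (f \<circ> X)"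
    then obtain c where "\<forall>z. (f \<circ> X) z = c * f z"
      using proportional_multiple[OF proportional_sym] fu by blast
    then have "\<forall>z. f (X z) = c * f z" by simp
    then show False using trace_zero_common_eigenfunctional[OF f XY _ b] fu by blast
  qed
qed

locale rank_one_commutator_semigroup =
  fixes SS :: "('a::complex_banach \<Rightarrow> 'a) set"
  assumes linear: "X \<in> SS \<Longrightarrow> clinear_op X"
    and closed: "X \<in> SS \<Longrightarrow> Y \<in> SS \<Longrightarrow> X \<circ> Y \<in> SS"
    and rank: "X \<in> SS \<Longrightarrow> Y \<in> SS \<Longrightarrow> rank_le_one (commutator X Y)"
begin

lemma commutator_rank_one:
  assumes "X \<in> SS" and "Y \<in> SS"
  shows "\<exists>u f. clinear_fn f \<and> commutator X Y = tensor_op u f"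
  using rank_one_representation[OF commutator_linear[OF linear linear] rank] assms by blast

text \<open>If \<open>[X,Y] = u \<otimes> f\<close> with \<open>f(u) \<noteq> 0\<close>, then \<open>u\<close> is an eigenvector or \<open>f\<close> an eigenfunctional of \<open>X\<close>:
  by the Leibniz rule \<open>[X\<^sup>2,Y] = X u \<otimes> f + u \<otimes> (f \<circ> X)\<close>, and the rank dichotomy applies.\<close>
lemma eigen_alternative:
  assumes XS: "X \<in> SS" and YS: "Y \<in> SS" and f: "clinear_fn f"
    and XY: "commutator X Y = tensor_op u f" and fu: "f u \<noteq> 0"
  shows "(\<exists>a. X u = cscale a u) \<or> (\<exists>a. \<forall>z. f (X z) = a * f z)"
proof -
  have X: "clinear_op X" using linear XS by auto
  have XXY: "commutator (X \<circ> X) Y = (\<lambda>x. cscale (f x) (X u) + cscale ((f \<circ> X) x) u)"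
    by (rule ext) (simp only: commutator_comp_left[OF X] XY tensor_op_apply
        module_hom.scale[OF X] comp_apply)
  from rank[OF closed[OF XS XS] YS] have "cparallel (X u) u \<or> proportional f (f \<circ> X)"
    unfolding XXY by (rule two_term_rank_dichotomy[OF f module_hom_compose[OF X f]])
  then have "cparallel (X u) u \<or> proportional (f \<circ> X) f" using proportional_sym by blast
  from multiple_alternative[OF this f fu] show ?thesis by simp
qed

text \<open>Otherwise the eigen-alternative
  holds for \<open>X\<close> and, via \<open>[Y,X] = u \<otimes> (-f)\<close>, also for \<open>Y\<close>; each of the four combinations is one of
  the special situations above.\<close>
lemma trace_zero:
  assumes XS: "X \<in> SS" and YS: "Y \<in> SS" and f: "clinear_fn f"
    and XY: "commutator X Y = tensor_op u f"
  shows "f u = 0"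
proof (rule ccontr)
  assume fu: "f u \<noteq> 0"
  have X: "clinear_op X" and Y: "clinear_op Y" using linear XS YS by auto
  have YX: "commutator Y X = tensor_op u (\<lambda>x. - f x)"
    by (rule ext) (simp add: commutator_swap[of Y] XY)
  have eigen_X: "(\<exists>a. X u = cscale a u) \<or> (\<exists>a. \<forall>z. f (X z) = a * f z)"
    by (rule eigen_alternative[OF XS YS f XY fu])
  have "(\<exists>b. Y u = cscale b u) \<or> (\<exists>b. \<forall>z. - f (Y z) = b * - f z)"
    using fu by (intro eigen_alternative[OF YS XS clinear_fn_uminus[OF f] YX]) simp
  then have eigen_Y: "(\<exists>b. Y u = cscale b u) \<or> (\<exists>b. \<forall>z. f (Y z) = b * f z)" by simp
  have rank2: "rank_le_one (commutator (X \<circ> X) (Y \<circ> Y))"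
    and rank2': "rank_le_one (commutator (Y \<circ> Y) (X \<circ> X))"
    using rank closed XS YS by auto
  from eigen_X eigen_Y show False
  proof (elim disjE exE)
    fix a b assume "X u = cscale a u" and "Y u = cscale b u"
    then show False using trace_zero_common_eigenvector[OF X Y f XY] fu by blast
  next
    fix a b assume "X u = cscale a u" and "\<forall>z. f (Y z) = b * f z"
    then show False using trace_zero_mixed[OF X Y f XY _ _ rank2] fu by blast
  next
    fix a b assume "\<forall>z. f (X z) = a * f z" and "Y u = cscale b u"
    then have "- f u = 0"
      using trace_zero_mixed[OF Y X clinear_fn_uminus[OF f] YX _ _ rank2', of b a] by simp
    then show False using fu by simp
  next
    fix a b assume "\<forall>z. f (X z) = a * f z" and "\<forall>z. f (Y z) = b * f z"
    then show False using trace_zero_common_eigenfunctional[OF f XY] fu by blast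
  qed
qed

text \<open>The trace is also zero for commutators written as \<open>u\<^sub>1 \<otimes> f\<^sub>1 - u\<^sub>2 \<otimes> f\<^sub>2\<close>: by the rank dichotomy
  such a commutator can be rewritten as a single rank-one operator.\<close>
lemma trace_zero_difference:
  assumes XS: "X \<in> SS" and YS: "Y \<in> SS" and f1: "clinear_fn f1" and f2: "clinear_fn f2"
    and XY: "commutator X Y = (\<lambda>x. cscale (f1 x) u1 - cscale (f2 x) u2)"
  shows "f1 u1 = f2 u2"
proof -
  have reduce: "g v = 0" if "clinear_fn g" and "\<And>x. commutator X Y x = cscale (g x) v" for g v
    using trace_zero[OF XS YS that(1)] that(2) by (simp add: fun_eq_iff)
  from rank[OF XS YS] have "cparallel u1 u2 \<or> proportional f1 f2"
    unfolding XY by (rule two_term_rank_dichotomy_diff[OF f1 f2])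
  then consider c where "u1 = cscale c u2" | c where "u2 = cscale c u1"
    | c where "\<And>x. f1 x = c * f2 x" | c where "\<And>x. f2 x = c * f1 x"
    unfolding cparallel_def proportional_def by blast
  then show ?thesis
  proof cases
    case (1 c)
    have "c * f1 u2 - f2 u2 = 0"
      by (rule reduce[OF clinear_fn_diff[OF clinear_fn_scale[OF f1] f2]])
        (simp add: XY 1 cvs.scale_left_diff_distrib)
    then show ?thesis by (simp add: 1 module_hom.scale[OF f1])
  next
    case (2 c)
    have "f1 u1 - c * f2 u1 = 0"
      by (rule reduce[OF clinear_fn_diff[OF f1 clinear_fn_scale[OF f2]]])
        (simp add: XY 2 cvs.scale_left_diff_distrib)
    then show ?thesis by (simp add: 2 module_hom.scale[OF f2])
  next
    case (3 c)
    have "f2 (cscale c u1 - u2) = 0"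
      by (rule reduce[OF f2]) (simp add: XY 3 cvs.scale_right_diff_distrib)
    then show ?thesis by (simp add: 3 hom_simps[OF f2])
  next
    case (4 c)
    have "f1 (u1 - cscale c u2) = 0"
      by (rule reduce[OF f1]) (simp add: XY 4 cvs.scale_right_diff_distrib)
    then show ?thesis by (simp add: 4 hom_simps[OF f1])
  qed
qed

end

text \<open>The configuration is invariant under the cyclic shift
  \<open>(A, B, C) \<mapsto> (B, C, A)\<close>, which transports every lemma to the other two cyclic positions.\<close>
locale commutator_triple = rank_one_commutator_semigroup +
  fixes A B C :: "'a::complex_banach \<Rightarrow> 'a" and y1 y2 y3 :: 'a and \<phi>1 \<phi>2 \<phi>3 :: "'a \<Rightarrow> complex"
  assumes members: "A \<in> SS" "B \<in> SS" "C \<in> SS"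
    and functionals: "clinear_fn \<phi>1" "clinear_fn \<phi>2" "clinear_fn \<phi>3"
    and AB: "commutator A B = tensor_op y1 \<phi>1"
    and BC: "commutator B C = tensor_op y2 \<phi>2"
    and CA: "commutator C A = tensor_op y3 \<phi>3"
begin

lemma rotate: "commutator_triple SS B C A y2 y3 y1 \<phi>2 \<phi>3 \<phi>1"
  using rank_one_commutator_semigroup_axioms members functionals AB BC CA
  unfolding commutator_triple_def commutator_triple_axioms_def by blast

lemma trace_value: "\<phi>1 y1 = 0"
  by (rule trace_zero[OF members(1,2) functionals(1) AB])

text \<open>Expansions of \<open>[CA,B] = C[A,B] + [C,B]A\<close> and \<open>[AC,B] = A[C,B] + [A,B]C\<close>.\<close>
lemma expansion_outer:
  "commutator (C \<circ> A) B = (\<lambda>x. cscale (\<phi>1 x) (C y1) - cscale ((\<phi>2 \<circ> A) x) y2)"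
  by (rule ext) (simp add: commutator_comp_left[OF linear[OF members(3)]] commutator_swap[of C] AB BC
      module_hom.scale[OF linear[OF members(3)]])

lemma expansion_inner:
  "commutator (A \<circ> C) B = (\<lambda>x. cscale ((\<phi>1 \<circ> C) x) y1 - cscale (\<phi>2 x) (A y2))"
  by (rule ext) (simp add: commutator_comp_left[OF linear[OF members(1)]] commutator_swap[of C] AB BC
      hom_simps[OF linear[OF members(1)]])

text \<open>Trace zero for \<open>[CA,B]\<close> gives \<open>\<phi>\<^sub>1(C y\<^sub>1) = \<phi>\<^sub>2(A y\<^sub>2)\<close>; by rotation these equal \<open>\<phi>\<^sub>3(B y\<^sub>3)\<close>.\<close>
lemma trace_identity: "\<phi>1 (C y1) = \<phi>2 (A y2)"
  using trace_zero_difference[OF closed[OF members(3,1)] members(2) functionals(1)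
      module_hom_compose[OF linear[OF members(1)] functionals(2)] expansion_outer] by simp

lemma outer_dichotomy:
  assumes "\<phi>1 (C y1) \<noteq> 0"
  shows "same_annihilators (C y1) y2 \<or> same_kernel \<phi>1 (\<phi>2 \<circ> A)" and "\<phi>1 y2 \<noteq> 0"
proof -
  have f2: "clinear_fn (\<phi>2 \<circ> A)" by (rule module_hom_compose[OF linear[OF members(1)] functionals(2)])
  have n2: "(\<phi>2 \<circ> A) y2 \<noteq> 0" using assms trace_identity by simp
  from rank[OF closed[OF members(3,1)] members(2)]
  show d: "same_annihilators (C y1) y2 \<or> same_kernel \<phi>1 (\<phi>2 \<circ> A)"
    unfolding expansion_outer by (rule difference_rank_dichotomy[OF functionals(1) f2 _ assms n2])
  show "\<phi>1 y2 \<noteq> 0" by (rule cross_values_nonzero(1)[OF d functionals(1) f2 assms n2])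
qed

lemma inner_dichotomy:
  assumes "\<phi>1 (C y1) \<noteq> 0"
  shows "same_annihilators y1 (A y2) \<or> same_kernel (\<phi>1 \<circ> C) \<phi>2" and "\<phi>2 y1 \<noteq> 0"
proof -
  have f1: "clinear_fn (\<phi>1 \<circ> C)" by (rule module_hom_compose[OF linear[OF members(3)] functionals(1)])
  have n1: "(\<phi>1 \<circ> C) y1 \<noteq> 0" using assms by simp
  have n2: "\<phi>2 (A y2) \<noteq> 0" using assms trace_identity by simp
  from rank[OF closed[OF members(1,3)] members(2)]
  show d: "same_annihilators y1 (A y2) \<or> same_kernel (\<phi>1 \<circ> C) \<phi>2"
    unfolding expansion_inner by (rule difference_rank_dichotomy[OF f1 functionals(2) _ n1 n2])
  show "\<phi>2 y1 \<noteq> 0" by (rule cross_values_nonzero(2)[OF d f1 functionals(2) n1 n2])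
qed

text \<open>Evaluating the Jacobi identity at \<open>y\<^sub>1\<close> and applying \<open>\<phi>\<^sub>3\<close> yields a relation between cross values;
  the trace facts of the other positions come from the rotated triples.\<close>
lemma jacobi_relation: "\<phi>2 y1 * \<phi>3 (A y2) = \<phi>2 (A y1) * \<phi>3 y2"
proof -
  interpret r1: commutator_triple SS B C A y2 y3 y1 \<phi>2 \<phi>3 \<phi>1 by (rule rotate)
  interpret r2: commutator_triple SS C A B y3 y1 y2 \<phi>3 \<phi>1 \<phi>2 by (rule r1.rotate)
  note lin = linear[OF members(1)] linear[OF members(2)] linear[OF members(3)]
  have "cscale (\<phi>2 y1) (A y2) - cscale (\<phi>2 (A y1)) y2
      + (cscale (\<phi>3 y1) (B y3) - cscale (\<phi>3 (B y1)) y3)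
      + (cscale (\<phi>1 y1) (C y1) - cscale (\<phi>1 (C y1)) y1) = 0"
    using jacobi_identity[OF lin, of y1]
    by (simp only: AB BC CA commutator_tensor_op[OF lin(1)] commutator_tensor_op[OF lin(2)]
        commutator_tensor_op[OF lin(3)])
  then have "\<phi>3 (cscale (\<phi>2 y1) (A y2) - cscale (\<phi>2 (A y1)) y2
      + (cscale (\<phi>3 y1) (B y3) - cscale (\<phi>3 (B y1)) y3)
      + (cscale (\<phi>1 y1) (C y1) - cscale (\<phi>1 (C y1)) y1)) = 0"
    by (simp add: module_hom.zero[OF functionals(3)])
  then show ?thesis
    using trace_value r2.trace_value trace_identity r1.trace_identity
    by (simp add: hom_simps[OF functionals(3)] algebra_simps)
qed

end

text \<open>The cyclic shift of a triple is again a triple; registering it as a sublocale makes the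
  lemmas above available in all three cyclic positions, under the prefixes \<open>rot\<close> and \<open>rot.rot\<close>.\<close>
sublocale commutator_triple \<subseteq> rot: commutator_triple SS B C A y2 y3 y1 \<phi>2 \<phi>3 \<phi>1
  by (rule rotate)

context commutator_triple
begin

text \<open>The diagonal values in the three cyclic positions are equal, so they vanish simultaneously.\<close>
lemma diagonal_values_nonzero:
  assumes "\<phi>1 (C y1) \<noteq> 0"
  shows "\<phi>2 (A y2) \<noteq> 0" and "\<phi>3 (B y3) \<noteq> 0"
  using assms trace_identity rot.trace_identity by simp_all

text \<open>Assume \<open>\<phi>\<^sub>1(C y\<^sub>1) \<noteq> 0\<close>. The outer dichotomy in the second position says that \<open>A y\<^sub>2\<close> and \<open>y\<^sub>3\<close>
  have the same annihilators or \<open>\<phi>\<^sub>2\<close> and \<open>\<phi>\<^sub>3 \<circ> B\<close> have the same kernel. In the first case, the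
  Jacobi relation and the remaining dichotomies force one of the non-zero cross values to vanish.\<close>
lemma annihilator_branch_impossible:
  assumes m: "\<phi>1 (C y1) \<noteq> 0" and L3: "same_annihilators (A y2) y3"
  shows False
proof -
  note m' = diagonal_values_nonzero[OF m]
  note d2 = inner_dichotomy[OF m] and d4 = rot.inner_dichotomy[OF m'(1)]
    and d5 = rot.rot.outer_dichotomy[OF m'(2)] and d6 = rot.rot.inner_dichotomy[OF m'(2)]
  note t = trace_value rot.trace_value rot.rot.trace_value
  note annihilate = same_annihilatorsD[OF _ functionals(1)] same_annihilatorsD[OF _ functionals(2)]
    same_annihilatorsD[OF _ functionals(3)]
  have "\<phi>3 (A y2) = 0" using L3 t(3) annihilate(3) by blast
  then have "\<phi>2 (A y1) * \<phi>3 y2 = 0" using jacobi_relation by simp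
  then have "\<phi>2 (A y1) = 0" using d4(2) by simp
  from d4(1) show False
  proof
    assume "same_kernel (\<phi>2 \<circ> A) \<phi>3"
    then show False using \<open>\<phi>2 (A y1) = 0\<close> d5(2) same_kernelD by fastforce
  next
    assume L4: "same_annihilators y2 (B y3)"
    from d5(1) show False
    proof
      assume "same_annihilators (B y3) y1"
      then show False using L4 t(2) d2(2) annihilate(2) by blast
    next
      assume K5: "same_kernel \<phi>3 (\<phi>1 \<circ> C)"
      from d2(1) show False
      proof
        assume "same_annihilators y1 (A y2)"
        then show False using L3 t(1) d6(2) annihilate(1) by blast
      next
        assume "same_kernel (\<phi>1 \<circ> C) \<phi>2"
        then show False using K5 t(2) d4(2) same_kernelD by metis
      qed
    qed
  qed
qed

text \<open>In the second case the other Jacobi relation and the remaining dichotomies again force a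
  non-zero cross value to vanish.\<close>
lemma kernel_branch_impossible:
  assumes m: "\<phi>1 (C y1) \<noteq> 0" and K3: "same_kernel \<phi>2 (\<phi>3 \<circ> B)"
  shows False
proof -
  note m' = diagonal_values_nonzero[OF m]
  note d1 = outer_dichotomy[OF m] and d3 = rot.outer_dichotomy[OF m'(1)]
    and d4 = rot.inner_dichotomy[OF m'(1)] and d5 = rot.rot.outer_dichotomy[OF m'(2)]
    and d6 = rot.rot.inner_dichotomy[OF m'(2)]
  note t = trace_value rot.trace_value
  from d4(1) show False
  proof
    assume L4: "same_annihilators y2 (B y3)"
    have "\<phi>3 (B y2) = 0" using K3 t(2) same_kernelD by fastforce
    then have "\<phi>3 y2 * \<phi>1 (B y3) = 0" using rot.jacobi_relation by simp
    moreover have "\<phi>1 (B y3) \<noteq> 0" using L4 d1(2) same_annihilatorsD[OF _ functionals(1)] by blast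
    ultimately show False using d4(2) by simp
  next
    assume K4: "same_kernel (\<phi>2 \<circ> A) \<phi>3"
    from d1(1) show False
    proof
      assume L1: "same_annihilators (C y1) y2"
      from d6(1) show False
      proof
        assume "same_annihilators y3 (C y1)"
        then show False using L1 t(2) d3(2) same_annihilatorsD[OF _ functionals(2)] by blast
      next
        assume "same_kernel (\<phi>3 \<circ> B) \<phi>1"
        then show False using K3 t(2) d1(2) same_kernelD by metis
      qed
    next
      assume "same_kernel \<phi>1 (\<phi>2 \<circ> A)"
      then show False using K4 t(1) d5(2) same_kernelD by metis
    qed
  qed
qed

text \<open>The key lemma: \<open>\<phi>\<^sub>1(C y\<^sub>1) = 0\<close>, since both branches of the outer dichotomy in the second
  position are impossible otherwise.\<close>
lemma diagonal_value_vanishes: "\<phi>1 (C y1) = 0"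
proof (rule ccontr)
  assume m: "\<phi>1 (C y1) \<noteq> 0"
  from rot.outer_dichotomy(1)[OF diagonal_values_nonzero(1)[OF m]] show False
    using annihilator_branch_impossible[OF m] kernel_branch_impossible[OF m] by blast
qed

end

context rank_one_commutator_semigroup
begin

lemma tensor_value_vanishes:
  assumes "A \<in> SS" "B \<in> SS" "C \<in> SS" and "clinear_fn \<phi>" and "commutator A B = tensor_op y \<phi>"
  shows "\<phi> (C y) = 0"
proof -
  obtain y2 \<phi>2 where "clinear_fn \<phi>2" "commutator B C = tensor_op y2 \<phi>2"
    using commutator_rank_one[OF assms(2,3)] by blast
  moreover obtain y3 \<phi>3 where "clinear_fn \<phi>3" "commutator C A = tensor_op y3 \<phi>3"
    using commutator_rank_one[OF assms(3,1)] by blast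
  ultimately interpret commutator_triple SS A B C y y2 y3 \<phi> \<phi>2 \<phi>3
    using assms by (intro commutator_triple.intro rank_one_commutator_semigroup_axioms
        commutator_triple_axioms.intro)
  show ?thesis by (rule diagonal_value_vanishes)
qed

end

lemma bop_clinear_op: "bop T \<Longrightarrow> clinear_op T"
  unfolding bop_def by (auto intro!: clinear_opI linear_add[OF bounded_linear.linear])

lemma cfunctional_clinear_fn: "cfunctional \<phi> \<Longrightarrow> clinear_fn \<phi>"
  unfolding cfunctional_def by (auto intro!: clinear_fnI linear_add[OF bounded_linear.linear])

text \<open>Adjoining the identity preserves the hypotheses, since the identity commutes with everything.\<close>
lemma semigroup_with_identity:
  fixes \<S> :: "('a::complex_banach \<Rightarrow> 'a) set"
  assumes "\<forall>T\<in>\<S>. bop T"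
    and "\<forall>S\<in>\<S>. \<forall>T\<in>\<S>. S \<circ> T \<in> \<S>"
    and "\<forall>S\<in>\<S>. \<forall>T\<in>\<S>. rank_le_one (commutator S T)"
  shows "rank_one_commutator_semigroup (\<S> \<union> {id})"
proof (rule rank_one_commutator_semigroup.intro)
  fix X assume "X \<in> \<S> \<union> {id}"
  then show "clinear_op X"
    using assms(1) bop_clinear_op[of X] clinear_opI[of id] by auto
next
  fix X Y assume X: "X \<in> \<S> \<union> {id}" and Y: "Y \<in> \<S> \<union> {id}"
  show "X \<circ> Y \<in> \<S> \<union> {id}" using X Y assms(2) by auto
  have "rank_le_one (\<lambda>x::'a. 0)"
    unfolding rank_le_one_def by (intro exI[of _ 0] allI exI[of _ 0]) simp
  then have "rank_le_one (commutator id T)" and "rank_le_one (commutator T id)" for T :: "'a \<Rightarrow> 'a"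
    by (simp_all add: commutator_def)
  then show "rank_le_one (commutator X Y)" using X Y assms(3) by blast
qed

theorem mainTheorem1:
  fixes \<S> :: "('a::complex_banach \<Rightarrow> 'a) set"
    and A B :: "'a \<Rightarrow> 'a" and y :: 'a and \<phi> :: "'a \<Rightarrow> complex"
  assumes "cdim_ge_two TYPE('a)"
    and "\<forall>T\<in>\<S>. bop T"
    and "\<forall>S\<in>\<S>. \<forall>T\<in>\<S>. S \<circ> T \<in> \<S>"
    and "\<forall>S\<in>\<S>. \<forall>T\<in>\<S>. rank_le_one (commutator S T)"
    and "A \<in> \<S>" and "B \<in> \<S>"
    and "y \<noteq> 0" and "cfunctional \<phi>" and "\<phi> \<noteq> (\<lambda>x. 0)"
    and "commutator A B = tensor_op y \<phi>"
  shows "\<forall>C \<in> \<S> \<union> {id}. \<phi> (C y) = 0"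
proof
  fix C assume "C \<in> \<S> \<union> {id}"
  interpret rank_one_commutator_semigroup "\<S> \<union> {id}"
    using semigroup_with_identity[OF assms(2-4)] .
  show "\<phi> (C y) = 0"
    using tensor_value_vanishes[OF _ _ \<open>C \<in> \<S> \<union> {id}\<close> cfunctional_clinear_fn[OF assms(8)] assms(10)]
      assms(5,6) by blast
qed

end
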